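(* Let $d\ge 2$, $2\le r\le d$ and $n_1\ge n_2\ge\cdots\ge n_d\ge 2$ be integers. If a Latin hypercuboid of dimension $d$, type $(n_1,\dots,n_d)$, class $r$ and order $\prod_{i=1}^r n_i$ exists, then \[\sum_{i=1}^d n_i-\prod_{i=1}^r n_i\le d-1.\]
   Context: For integers $n_1\ge\cdots\ge n_d\ge 2$ and $1\le r\le d$, an $r$-dimensional subarray of $[n_1]\times\cdots\times[n_d]$ (where $[m]=\{1,\dots,m\}$) is a set of cells obtained by fixing the values of $d-r$ of the coordinates and letting the other $r$ coordinates range freely. A Latin hypercuboid of dimension $d$, type $(n_1,\dots,n_d)$, class $r$ and order $n=\prod_{i=1}^r n_i$, written $\mathrm{LHC}(n_1,\dots,n_d,r)$, is a map from $[n_1]\times\cdots\times[n_d]$ to a set of $n$ symbols such that in every $r$-dimensional subarray each symbol occurs at most once. When $n_1=\cdots=n_d=n$ it is called a Latin hypercube $\mathrm{LHC}(d,n,r)$ (with $n^r$ symbols). *)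

theory Defs
  imports "HOL-Library.FuncSet"
begin

definition cells :: "nat \<Rightarrow> (nat \<Rightarrow> nat) \<Rightarrow> (nat \<Rightarrow> nat) set" where
  "cells d n = PiE {1..d} (\<lambda>i. {1..n i})"

definition subarray :: "nat \<Rightarrow> (nat \<Rightarrow> nat) \<Rightarrow> nat set \<Rightarrow> (nat \<Rightarrow> nat) \<Rightarrow> (nat \<Rightarrow> nat) set" where
  "subarray d n R c = {x \<in> cells d n. \<forall>i \<in> {1..d} - R. x i = c i}"

definition is_LHC :: "nat \<Rightarrow> (nat \<Rightarrow> nat) \<Rightarrow> nat \<Rightarrow> ((nat \<Rightarrow> nat) \<Rightarrow> 'a) \<Rightarrow> 'a set \<Rightarrow> bool" where
  "is_LHC d n r L S \<longleftrightarrow>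
     finite S \<and> card S = (\<Prod>i=1..r. n i) \<and>
     L ` cells d n \<subseteq> S \<and>
     (\<forall>R c. R \<subseteq> {1..d} \<and> card R = r \<and> c \<in> cells d n \<longrightarrow>
        inj_on L (subarray d n R c))"

end

theory Submission
  imports Defs
begin

text \<open>Take a base cell c and the cross around it: c together with every cell that differs
  from c in exactly one coordinate. Any two cells of the cross differ in at most two
  coordinates, so for r \<ge> 2 they lie in a common r-dimensional subarray and carry distinct
  symbols. The cross has 1 + \<Sum>(n i - 1) cells, which therefore is at most the number of
  symbols \<Prod>_{i \<le> r} n i.\<close>

definition hamming_dist :: "nat \<Rightarrow> (nat \<Rightarrow> nat) \<Rightarrow> (nat \<Rightarrow> nat) \<Rightarrow> nat" where
  "hamming_dist d x y = card {i \<in> {1..d}. x i \<noteq> y i}"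

definition cross :: "nat \<Rightarrow> (nat \<Rightarrow> nat) \<Rightarrow> (nat \<Rightarrow> nat) \<Rightarrow> (nat \<Rightarrow> nat) set" where
  "cross d n c = insert c ((\<lambda>(j, v). c(j := v)) ` (SIGMA j:{1..d}. {1..n j} - {c j}))"

lemma subarray_contains_close_cells:
  assumes "x \<in> cells d n" "y \<in> cells d n" "hamming_dist d x y \<le> r" "r \<le> d"
  obtains R where "R \<subseteq> {1..d}" "card R = r" "x \<in> subarray d n R x" "y \<in> subarray d n R x"
proof -
  define D where "D = {i \<in> {1..d}. x i \<noteq> y i}"
  have "card D \<le> r" "D \<subseteq> {1..d}"
    using assms(3) unfolding D_def hamming_dist_def by auto
  then obtain R where R: "D \<subseteq> R" "R \<subseteq> {1..d}" "card R = r"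
    using exists_subset_between[of D r "{1..d}"] assms(4) by auto
  have "y \<in> subarray d n R x"
    using assms(2) R(1) unfolding subarray_def D_def by auto
  moreover have "x \<in> subarray d n R x"
    using assms(1) unfolding subarray_def by auto
  ultimately show thesis using that R(2,3) by blast
qed

lemma LHC_inj_on_close_cells:
  assumes "is_LHC d n r L S" "r \<le> d" "A \<subseteq> cells d n"
    and "\<And>x y. x \<in> A \<Longrightarrow> y \<in> A \<Longrightarrow> hamming_dist d x y \<le> r"
  shows "inj_on L A"
proof (rule inj_onI)
  fix x y assume xy: "x \<in> A" "y \<in> A" "L x = L y"
  then obtain R where "R \<subseteq> {1..d}" "card R = r"
      "x \<in> subarray d n R x" "y \<in> subarray d n R x"
    using subarray_contains_close_cells assms(2-4) by (metis subsetD)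
  moreover have "x \<in> cells d n" using xy assms(3) by blast
  ultimately show "x = y"
    using assms(1) xy(3) unfolding is_LHC_def by (metis inj_onD)
qed

lemma LHC_card_le_symbols:
  assumes "is_LHC d n r L S" "A \<subseteq> cells d n" "inj_on L A"
  shows "card A \<le> (\<Prod>i=1..r. n i)"
proof -
  have "L ` A \<subseteq> S" "finite S" "card S = (\<Prod>i=1..r. n i)"
    using assms(1,2) unfolding is_LHC_def by auto
  then show ?thesis
    using card_mono card_image[OF assms(3)] by metis
qed

lemma cross_subset_cells:
  assumes "c \<in> cells d n"
  shows "cross d n c \<subseteq> cells d n"
proof -
  have "c(j := v) \<in> cells d n" if "j \<in> {1..d}" "v \<in> {1..n j}" for j v
    using assms that unfolding cells_def by (auto simp: PiE_def Pi_def extensional_def)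
  then show ?thesis
    using assms unfolding cross_def by auto
qed

lemma hamming_dist_cross:
  assumes "x \<in> cross d n c" "y \<in> cross d n c"
  shows "hamming_dist d x y \<le> 2"
proof -
  have "\<exists>j. \<forall>i. i \<noteq> j \<longrightarrow> z i = c i" if "z \<in> cross d n c" for z
    using that unfolding cross_def by auto
  then obtain j k where "\<forall>i. i \<noteq> j \<longrightarrow> x i = c i" "\<forall>i. i \<noteq> k \<longrightarrow> y i = c i"
    using assms by blast
  then have "{i \<in> {1..d}. x i \<noteq> y i} \<subseteq> {j, k}" by auto
  then have "card {i \<in> {1..d}. x i \<noteq> y i} \<le> card {j, k}"
    by (intro card_mono) auto
  also have "\<dots> \<le> 2" by (simp add: card_insert_le_m1)
  finally show ?thesis unfolding hamming_dist_def .
qed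

lemma card_cross:
  assumes "c \<in> cells d n"
  shows "card (cross d n c) = Suc (\<Sum>j=1..d. n j - 1)"
proof -
  define Sig where "Sig = (SIGMA j:{1..d}. {1..n j} - {c j})"
  have c_range: "c j \<in> {1..n j}" if "j \<in> {1..d}" for j
    using assms that unfolding cells_def by auto
  have "inj_on (\<lambda>(j, v). c(j := v)) Sig"
  proof (rule inj_onI, clarify)
    fix j v k w assume jv: "(j, v) \<in> Sig" and kw: "(k, w) \<in> Sig"
      and eq: "c(j := v) = c(k := w)"
    have "v \<noteq> c j" using jv unfolding Sig_def by auto
    then have "j = k"
      using fun_cong[OF eq, of j] by (auto split: if_splits)
    then show "j = k \<and> v = w"
      using fun_cong[OF eq, of j] by simp
  qed
  moreover have "c \<noteq> c(j := v)" if "(j, v) \<in> Sig" for j v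
    using that unfolding Sig_def by (auto simp: fun_eq_iff)
  then have "c \<notin> (\<lambda>(j, v). c(j := v)) ` Sig"
    by auto
  moreover have "card Sig = (\<Sum>j=1..d. n j - 1)"
    unfolding Sig_def using c_range by (simp add: card_Diff_singleton)
  ultimately show ?thesis
    unfolding cross_def Sig_def[symmetric]
    by (simp add: card_image Sig_def)
qed

theorem mainTheorem2:
  fixes d r :: nat and n :: "nat \<Rightarrow> nat" and L :: "(nat \<Rightarrow> nat) \<Rightarrow> 'a" and S :: "'a set"
  assumes "d \<ge> 2" and "2 \<le> r" and "r \<le> d"
    and "\<And>i j. 1 \<le> i \<Longrightarrow> i \<le> j \<Longrightarrow> j \<le> d \<Longrightarrow> n j \<le> n i"
    and "\<And>i. 1 \<le> i \<Longrightarrow> i \<le> d \<Longrightarrow> n i \<ge> 2"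
    and "is_LHC d n r L S"
  shows "int (\<Sum>i=1..d. n i) - int (\<Prod>i=1..r. n i) \<le> int d - 1"
proof -
  define c where "c = restrict (\<lambda>_. 1::nat) {1..d}"
  have c: "c \<in> cells d n"
    unfolding c_def cells_def using assms(5) by force
  have "inj_on L (cross d n c)"
    using LHC_inj_on_close_cells[OF assms(6,3) cross_subset_cells[OF c]]
      hamming_dist_cross assms(2) order_trans by blast
  then have "Suc (\<Sum>j=1..d. n j - 1) \<le> (\<Prod>i=1..r. n i)"
    using LHC_card_le_symbols[OF assms(6) cross_subset_cells[OF c]] card_cross[OF c] by simp
  moreover have "(\<Sum>i=1..d. n i) = (\<Sum>j=1..d. n j - 1) + d"
  proof -
    have "(\<Sum>i=1..d. n i) = (\<Sum>j=1..d. (n j - 1) + 1)"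
    proof (rule sum.cong)
      fix j assume "j \<in> {1..d}"
      then show "n j = n j - 1 + 1" using assms(5)[of j] by simp
    qed simp
    then show ?thesis by (simp only: sum.distrib) simp
  qed
  ultimately show ?thesis by linarith
qed

end
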